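(* Let $P_n\in\Pi_{n,d}$. Then for any $r>0$ and any direction $\boldsymbol{\mu}\in\mathbb{R}^d$ with $|\boldsymbol{\mu}|=1$, \[ \left|\frac{\partial^2P_n(\mathbf{x})}{\partial\boldsymbol{\mu}^2}\right|\le\left(\frac{8|\mathbf{x}|}{r}\right)^n\frac{8n(n-1)}{r^2}\|P_n\|_{L_\infty(B(r))},\quad |\mathbf{x}|\ge r/4. \]
   Context: $|\cdot|$ is the Euclidean norm, $B(r):=\{\mathbf{x}\in\mathbb{R}^d:|\mathbf{x}|\le r\}$, $\Pi_{n,d}$ is the space of real polynomials of total degree $\le n$ in $d$ variables, and $\frac{\partial^2}{\partial\boldsymbol{\mu}^2}$ denotes the second directional derivative in direction $\boldsymbol{\mu}$. *)

theory Defs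
  imports "HOL-Analysis.Analysis"
begin

definition poly_deg_le :: "nat \<Rightarrow> (real^'d \<Rightarrow> real) \<Rightarrow> bool" where
  "poly_deg_le n p \<longleftrightarrow>
     (\<exists>c :: ('d \<Rightarrow> nat) \<Rightarrow> real. \<forall>x.
        p x = (\<Sum>\<alpha>\<in>{\<alpha>. (\<Sum>i\<in>UNIV. \<alpha> i) \<le> n}. c \<alpha> * (\<Prod>i\<in>UNIV. (x $ i) ^ \<alpha> i)))"

definition dir_deriv2 :: "(real^'d \<Rightarrow> real) \<Rightarrow> real^'d \<Rightarrow> real^'d \<Rightarrow> real" where
  "dir_deriv2 p \<mu> x = deriv (\<lambda>s. deriv (\<lambda>t. p (x + t *\<^sub>R \<mu>)) s) 0"

definition sup_norm_ball :: "(real^'d \<Rightarrow> real) \<Rightarrow> real \<Rightarrow> real" where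
  "sup_norm_ball p r = (SUP y\<in>cball 0 r. \<bar>p y\<bar>)"

end

theory Submission
  imports Defs "HOL-Computational_Algebra.Polynomial"
begin

text \<open>Restricted to the line through \<open>x\<close> in direction \<open>\<mu>\<close>, \<open>P\<close> is a univariate polynomial
  \<open>q\<close> of degree at most \<open>n\<close>, and the second directional derivative is \<open>2 * coeff q 2\<close>.
  Chebyshev's growth bound \<open>|p(t)| \<le> (2t)^n max_[-1,1] |p|\<close> for \<open>t \<ge> 1\<close>, applied on rays
  from the origin, bounds \<open>|P|\<close> by \<open>(8|x|/r)^n\<close> times its maximum on \<open>B(r)\<close> throughout
  \<open>B(4|x|)\<close>, which contains the segment \<open>x + [-3|x|, 3|x|] \<mu>\<close>. The even part of \<open>q\<close> is
  \<open>E(t^2)\<close> with \<open>deg E \<le> n div 2\<close> and \<open>E'(0) = coeff q 2\<close>, so Markov's inequality at the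
  endpoint of \<open>[0, 9|x|^2]\<close> bounds \<open>coeff q 2\<close>. Both univariate estimates come from Lagrange
  interpolation at the extremal points \<open>cos (j pi / n)\<close> of \<open>T_n\<close>: for \<open>t \<ge> 1\<close> the Lagrange
  basis polynomials alternate in sign like \<open>T_n (cos (j pi / n)) = (-1)^j\<close>, which gives
  \<open>|p(t) - p(1)| \<le> (T_n(t) - 1) max_[-1,1] |p|\<close>.\<close>

fun chebyshev :: "nat \<Rightarrow> real poly" where
  "chebyshev 0 = 1"
| "chebyshev (Suc 0) = [:0, 1:]"
| "chebyshev (Suc (Suc n)) = [:0, 2:] * chebyshev (Suc n) - chebyshev n"

lemma degree_chebyshev: "degree (chebyshev n) \<le> n"
proof (induction n rule: chebyshev.induct)
  case (3 n)
  have "degree ([:0, 2:] * chebyshev (Suc n)) \<le> Suc (Suc n)"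
    using degree_mult_le[of "[:0, 2:]" "chebyshev (Suc n)"] 3(1) by simp
  with 3(2) show ?case by (simp add: degree_diff_le)
qed auto

lemma poly_chebyshev_cos: "poly (chebyshev n) (cos \<theta>) = cos (real n * \<theta>)"
proof (induction n rule: chebyshev.induct)
  case (3 n)
  have "real (Suc (Suc n)) * \<theta> = real (Suc n) * \<theta> + \<theta>"
    and "real n * \<theta> = real (Suc n) * \<theta> - \<theta>" by (simp_all add: algebra_simps)
  then have "cos (real (Suc (Suc n)) * \<theta>) = 2 * cos \<theta> * cos (real (Suc n) * \<theta>) - cos (real n * \<theta>)"
    by (simp only: cos_add cos_diff) (simp add: algebra_simps)
  with 3 show ?case by simp
qed auto

lemma poly_chebyshev_one: "poly (chebyshev n) 1 = 1"
  using poly_chebyshev_cos[of n 0] by simp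

lemma poly_chebyshev_mono_ge_one:
  "t \<ge> 1 \<Longrightarrow> 1 \<le> poly (chebyshev n) t \<and> poly (chebyshev n) t \<le> poly (chebyshev (Suc n)) t"
proof (induction n)
  case (Suc n)
  then show ?case by (simp add: algebra_simps) (smt (verit, best) mult_le_cancel_right1)
qed simp

lemma poly_chebyshev_le: "t \<ge> 1 \<Longrightarrow> poly (chebyshev n) t \<le> (2 * t) ^ n"
proof (induction n rule: chebyshev.induct)
  case (3 n)
  have "poly (chebyshev (Suc (Suc n))) t = 2 * t * poly (chebyshev (Suc n)) t - poly (chebyshev n) t"
    by simp
  also have "\<dots> \<le> 2 * t * poly (chebyshev (Suc n)) t"
    using poly_chebyshev_mono_ge_one[OF 3(3), of n] by simp
  also have "\<dots> \<le> 2 * t * (2 * t) ^ Suc n"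
    using 3 by (intro mult_left_mono) auto
  finally show ?case by simp
qed auto

lemma poly_pderiv_chebyshev_one: "poly (pderiv (chebyshev n)) 1 = real n ^ 2"
  by (induction n rule: chebyshev.induct)
     (simp_all add: pderiv_mult pderiv_pCons pderiv_diff pderiv_smult poly_chebyshev_one power2_eq_square
       algebra_simps)

definition chebyshev_node :: "nat \<Rightarrow> nat \<Rightarrow> real" where
  "chebyshev_node n j = cos (real j * pi / real n)"

lemma chebyshev_node_0 [simp]: "chebyshev_node n 0 = 1"
  by (simp add: chebyshev_node_def)

lemma abs_chebyshev_node_le: "\<bar>chebyshev_node n j\<bar> \<le> 1"
  by (simp add: chebyshev_node_def)

lemma chebyshev_node_strict_antimono:
  assumes "n \<ge> 1" "j < k" "k \<le> n"
  shows "chebyshev_node n k < chebyshev_node n j"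
proof -
  have n: "real n > 0" using assms by simp
  have "real j * pi / real n < real k * pi / real n"
    using assms n by (intro divide_strict_right_mono) auto
  moreover have "real k * pi / real n \<le> pi" using assms n by (simp add: field_simps)
  moreover have "0 \<le> real j * pi / real n" using n by simp
  ultimately show ?thesis
    unfolding chebyshev_node_def by (subst cos_mono_less_eq) auto
qed

lemma inj_on_chebyshev_node:
  assumes "n \<ge> 1"
  shows "inj_on (chebyshev_node n) {0..n}"
proof (rule inj_onI, rule ccontr)
  fix j k assume "j \<in> {0..n}" "k \<in> {0..n}" "chebyshev_node n j = chebyshev_node n k" "j \<noteq> k"
  then show False
    using chebyshev_node_strict_antimono[OF assms, of j k] chebyshev_node_strict_antimono[OF assms, of k j]
    by (auto simp: neq_iff)
qed

lemma poly_chebyshev_node: "n \<ge> 1 \<Longrightarrow> poly (chebyshev n) (chebyshev_node n j) = (-1) ^ j"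
  unfolding chebyshev_node_def poly_chebyshev_cos by simp

definition chebyshev_lagrange :: "nat \<Rightarrow> nat \<Rightarrow> real poly" where
  "chebyshev_lagrange n j =
     (\<Prod>k\<in>{0..n}-{j}. smult (1 / (chebyshev_node n j - chebyshev_node n k)) [:- chebyshev_node n k, 1:])"

lemma poly_chebyshev_lagrange:
  "poly (chebyshev_lagrange n j) t =
     (\<Prod>k\<in>{0..n}-{j}. (t - chebyshev_node n k) / (chebyshev_node n j - chebyshev_node n k))"
  unfolding chebyshev_lagrange_def poly_prod by (intro prod.cong refl) (simp add: diff_divide_distrib)

lemma degree_chebyshev_lagrange:
  assumes "j \<le> n"
  shows "degree (chebyshev_lagrange n j) \<le> n"
proof -
  have "degree (chebyshev_lagrange n j) \<le> sum (degree \<circ>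
          (\<lambda>k. smult (1 / (chebyshev_node n j - chebyshev_node n k)) [:- chebyshev_node n k, 1:])) ({0..n}-{j})"
    unfolding chebyshev_lagrange_def by (rule degree_prod_sum_le) simp
  also have "\<dots> \<le> (\<Sum>k\<in>{0..n}-{j}. 1)"
    by (intro sum_mono) (auto intro: order.trans[OF degree_smult_le])
  also have "\<dots> = n" using assms by simp
  finally show ?thesis .
qed

lemma poly_chebyshev_lagrange_node:
  assumes "n \<ge> 1" "i \<le> n" "j \<le> n"
  shows "poly (chebyshev_lagrange n j) (chebyshev_node n i) = (if i = j then 1 else 0)"
proof (cases "i = j")
  case True
  have "chebyshev_node n j \<noteq> chebyshev_node n k" if "k \<in> {0..n}-{j}" for k
    using that assms inj_on_chebyshev_node[OF assms(1)] by (auto dest: inj_onD)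
  then show ?thesis using True by (simp add: poly_chebyshev_lagrange)
next
  case False
  with assms have "i \<in> {0..n}-{j}" by auto
  then show ?thesis using False
    unfolding poly_chebyshev_lagrange by (subst prod_zero) auto
qed

lemma chebyshev_interpolation:
  assumes "n \<ge> 1" "degree p \<le> n"
  shows "poly p t = (\<Sum>j=0..n. poly p (chebyshev_node n j) * poly (chebyshev_lagrange n j) t)"
proof -
  define I where "I = (\<Sum>j=0..n. smult (poly p (chebyshev_node n j)) (chebyshev_lagrange n j))"
  have poly_I: "poly I t = (\<Sum>j=0..n. poly p (chebyshev_node n j) * poly (chebyshev_lagrange n j) t)"
    for t unfolding I_def poly_sum by simp
  have "degree I \<le> n" unfolding I_def
    by (intro degree_sum_le) (auto intro: order.trans[OF degree_smult_le] degree_chebyshev_lagrange)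
  moreover have "card (chebyshev_node n ` {0..n}) = n + 1"
    using inj_on_chebyshev_node[OF assms(1)] by (simp add: card_image)
  moreover have "poly p x = poly I x" if x: "x \<in> chebyshev_node n ` {0..n}" for x
  proof -
    obtain i where i: "i \<le> n" "x = chebyshev_node n i" using x by auto
    have "poly I x = (\<Sum>j=0..n. if i = j then poly p (chebyshev_node n j) else 0)"
      unfolding poly_I using i assms by (intro sum.cong refl) (simp add: poly_chebyshev_lagrange_node)
    also have "\<dots> = poly p x" using i by (subst sum.delta'[OF finite_atLeastAtMost]) auto
    finally show ?thesis by simp
  qed
  ultimately have "p = I"
    using assms(2) by (intro poly_eqI_degree[where A = "chebyshev_node n ` {0..n}"]) simp_all
  then show ?thesis using poly_I[of t] by (simp only:)
qed

lemma chebyshev_lagrange_denominator_sign: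
  assumes "n \<ge> 1" "j \<le> n"
  shows "0 < (-1) ^ j * (\<Prod>k\<in>{0..n}-{j}. chebyshev_node n j - chebyshev_node n k)"
proof -
  let ?d = "\<lambda>k. chebyshev_node n j - chebyshev_node n k"
  have split: "{0..n}-{j} = {0..<j} \<union> {j<..n}" using assms(2) by auto
  have "(\<Prod>k\<in>{0..n}-{j}. ?d k) = (\<Prod>k\<in>{0..<j}. ?d k) * (\<Prod>k\<in>{j<..n}. ?d k)"
    unfolding split by (rule prod.union_disjoint) auto
  then have "(-1) ^ j * (\<Prod>k\<in>{0..n}-{j}. ?d k) = (-1) ^ j * (\<Prod>k\<in>{0..<j}. ?d k) * (\<Prod>k\<in>{j<..n}. ?d k)"
    by (simp only: mult.assoc)
  also have "\<dots> = (\<Prod>k\<in>{0..<j}. - ?d k) * (\<Prod>k\<in>{j<..n}. ?d k)"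
    by (simp only: prod_uminus card_atLeastLessThan diff_zero)
  also have "0 < \<dots>"
  proof (intro mult_pos_pos prod_pos)
    fix k assume "k \<in> {0..<j}"
    then show "0 < - ?d k" using chebyshev_node_strict_antimono[OF assms(1), of k j] assms(2) by simp
  next
    fix k assume "k \<in> {j<..n}"
    then show "0 < ?d k" using chebyshev_node_strict_antimono[OF assms(1), of j k] by simp
  qed
  finally show ?thesis .
qed

lemma chebyshev_lagrange_sign:
  assumes "n \<ge> 1" "j \<le> n" "t \<ge> 1"
  shows "\<bar>poly (chebyshev_lagrange n j) t\<bar> = (-1) ^ j * poly (chebyshev_lagrange n j) t"
proof -
  define N where "N = (\<Prod>k\<in>{0..n}-{j}. t - chebyshev_node n k)"
  define D where "D = (\<Prod>k\<in>{0..n}-{j}. chebyshev_node n j - chebyshev_node n k)"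
  have "0 \<le> t - chebyshev_node n k" for k
    using abs_chebyshev_node_le[of n k] assms(3) by (simp add: abs_le_iff)
  then have "0 \<le> N"
    unfolding N_def by (rule prod_nonneg)
  moreover have "0 < (-1) ^ j * D"
    unfolding D_def by (rule chebyshev_lagrange_denominator_sign[OF assms(1,2)])
  moreover have "poly (chebyshev_lagrange n j) t = N / D"
    unfolding poly_chebyshev_lagrange N_def D_def by (rule prod_dividef)
  moreover have "(-1) ^ j * (N / D) = N / ((-1) ^ j * D)"
    by (cases "even j") simp_all
  ultimately have "0 \<le> (-1) ^ j * poly (chebyshev_lagrange n j) t"
    by (simp only:) (rule divide_nonneg_pos)
  moreover have "\<bar>poly (chebyshev_lagrange n j) t\<bar> = \<bar>(-1) ^ j * poly (chebyshev_lagrange n j) t\<bar>"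
    by (simp add: abs_mult)
  ultimately show ?thesis by simp
qed

lemma poly_chebyshev_lagrange_0_ge_one:
  assumes "n \<ge> 1" "t \<ge> 1"
  shows "1 \<le> poly (chebyshev_lagrange n 0) t"
  unfolding poly_chebyshev_lagrange chebyshev_node_0
proof (rule prod_ge_1)
  fix k assume "k \<in> {0..n}-{0}"
  then have "chebyshev_node n k < 1"
    using chebyshev_node_strict_antimono[OF assms(1), of 0 k] by simp
  with assms(2) show "1 \<le> (t - chebyshev_node n k) / (1 - chebyshev_node n k)"
    by (subst le_divide_eq_1_pos) auto
qed

lemma abs_poly_diff_one_le_chebyshev:
  fixes p :: "real poly"
  assumes "degree p \<le> n" and bnd: "\<And>s. \<bar>s\<bar> \<le> 1 \<Longrightarrow> \<bar>poly p s\<bar> \<le> M" and t: "t \<ge> 1"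
  shows "\<bar>poly p t - poly p 1\<bar> \<le> M * (poly (chebyshev n) t - 1)"
proof (cases "n = 0")
  case True
  with assms(1) obtain a where "p = [:a:]" by (auto elim: degree_eq_zeroE)
  then show ?thesis using True by simp
next
  case False
  then have n: "n \<ge> 1" by simp
  let ?x = "chebyshev_node n" and ?L = "\<lambda>j. poly (chebyshev_lagrange n j) t"
  have M: "\<bar>poly p (?x j)\<bar> \<le> M" for j using bnd abs_chebyshev_node_le by blast
  have L0: "1 \<le> ?L 0" by (rule poly_chebyshev_lagrange_0_ge_one[OF n t])
  have p: "poly p t - poly p 1 = poly p 1 * (?L 0 - 1) + (\<Sum>j=1..n. poly p (?x j) * ?L j)"
    unfolding chebyshev_interpolation[OF n assms(1), of t] using n
    by (simp add: sum.atLeast_Suc_atMost algebra_simps)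
  have T: "poly (chebyshev n) t - 1 = (?L 0 - 1) + (\<Sum>j=1..n. (-1) ^ j * ?L j)"
    unfolding chebyshev_interpolation[OF n degree_chebyshev, of t] using n
    by (simp add: sum.atLeast_Suc_atMost poly_chebyshev_node)
  have "\<bar>poly p t - poly p 1\<bar> \<le> \<bar>poly p 1\<bar> * (?L 0 - 1) + (\<Sum>j=1..n. \<bar>poly p (?x j)\<bar> * \<bar>?L j\<bar>)"
    unfolding p using L0
    by (intro order.trans[OF abs_triangle_ineq] add_mono order.trans[OF sum_abs])
       (simp_all add: abs_mult)
  also have "\<dots> \<le> M * (?L 0 - 1) + (\<Sum>j=1..n. M * ((-1) ^ j * ?L j))"
  proof (intro add_mono sum_mono)
    show "\<bar>poly p 1\<bar> * (?L 0 - 1) \<le> M * (?L 0 - 1)"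
      using M[of 0] L0 by (intro mult_right_mono) simp_all
    fix j assume "j \<in> {1..n}"
    then show "\<bar>poly p (?x j)\<bar> * \<bar>?L j\<bar> \<le> M * ((-1) ^ j * ?L j)"
      using M[of j] chebyshev_lagrange_sign[OF n _ t, of j] by (metis abs_ge_zero atLeastAtMost_iff mult_right_mono)
  qed
  also have "\<dots> = M * (poly (chebyshev n) t - 1)"
    unfolding T by (simp add: algebra_simps sum_distrib_left)
  finally show ?thesis .
qed

lemma abs_poly_le_growth:
  fixes p :: "real poly"
  assumes "degree p \<le> n" and bnd: "\<And>s. \<bar>s\<bar> \<le> 1 \<Longrightarrow> \<bar>poly p s\<bar> \<le> M" and t: "t \<ge> 1"
  shows "\<bar>poly p t\<bar> \<le> M * (2 * t) ^ n"
proof -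
  have "0 \<le> M" using bnd[of 0] by simp
  have "\<bar>poly p t\<bar> \<le> \<bar>poly p 1\<bar> + \<bar>poly p t - poly p 1\<bar>" by simp
  also have "\<dots> \<le> M + M * (poly (chebyshev n) t - 1)"
    using bnd[of 1] abs_poly_diff_one_le_chebyshev[OF assms] by simp
  also have "\<dots> = M * poly (chebyshev n) t" by (simp add: algebra_simps)
  also have "\<dots> \<le> M * (2 * t) ^ n" using poly_chebyshev_le[OF t] \<open>0 \<le> M\<close> by (simp add: mult_left_mono)
  finally show ?thesis .
qed

lemma markov_endpoint:
  fixes p :: "real poly"
  assumes "degree p \<le> n" and bnd: "\<And>s. \<bar>s\<bar> \<le> 1 \<Longrightarrow> \<bar>poly p s\<bar> \<le> M"
  shows "\<bar>poly (pderiv p) 1\<bar> \<le> M * real n ^ 2"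
proof -
  let ?dq = "\<lambda>f y. (f y - f 1) / (y - 1)"
  have lim_p: "(?dq (poly p) \<longlongrightarrow> poly (pderiv p) 1) (at_right 1)"
    using poly_DERIV[of p 1] unfolding has_field_derivative_iff
    by (rule tendsto_mono[OF at_le, rotated]) simp
  have lim_T: "(?dq (poly (chebyshev n)) \<longlongrightarrow> real n ^ 2) (at_right 1)"
    using poly_DERIV[of "chebyshev n" 1] unfolding has_field_derivative_iff poly_pderiv_chebyshev_one
    by (rule tendsto_mono[OF at_le, rotated]) simp
  have "\<forall>\<^sub>F y in at_right 1. \<bar>?dq (poly p) y\<bar> \<le> M * ?dq (poly (chebyshev n)) y"
  proof (rule eventually_mono[OF eventually_at_right_less])
    fix y :: real assume "1 < y"
    then show "\<bar>?dq (poly p) y\<bar> \<le> M * ?dq (poly (chebyshev n)) y"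
      using abs_poly_diff_one_le_chebyshev[OF assms, of y]
      by (simp add: abs_divide poly_chebyshev_one divide_right_mono)
  qed
  from tendsto_le[OF trivial_limit_at_right_real tendsto_mult_left[OF lim_T] tendsto_rabs[OF lim_p] this]
  show ?thesis by simp
qed

lemma abs_coeff_one_le_markov:
  fixes E :: "real poly"
  assumes "degree E \<le> m" and H: "H > 0"
    and bnd: "\<And>u. 0 \<le> u \<Longrightarrow> u \<le> H \<Longrightarrow> \<bar>poly E u\<bar> \<le> M"
  shows "\<bar>coeff E 1\<bar> \<le> 2 * real m ^ 2 * M / H"
proof -
  define F where "F = pcompose E [:H / 2, - H / 2:]"
  have affine: "poly [:H / 2, - H / 2:] w = H / 2 * (1 - w)" for w
    by (simp add: field_simps)
  have poly_F: "poly F w = poly E (H / 2 * (1 - w))" for w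
    unfolding F_def poly_pcompose affine ..
  have "degree F \<le> degree E * degree [:H / 2, - H / 2:]"
    unfolding F_def by (rule degree_pcompose_le)
  also have "\<dots> \<le> m * 1" using assms(1) by (intro mult_le_mono) auto
  finally have "degree F \<le> m" by simp
  moreover have "\<bar>poly F w\<bar> \<le> M" if "\<bar>w\<bar> \<le> 1" for w
    unfolding poly_F using that H by (intro bnd) (auto simp: abs_le_iff)
  ultimately have "\<bar>poly (pderiv F) 1\<bar> \<le> M * real m ^ 2" by (rule markov_endpoint)
  moreover have "poly (pderiv F) 1 = coeff E 1 * (- H / 2)"
    unfolding F_def pderiv_pcompose
    by (simp add: poly_pcompose poly_0_coeff_0 coeff_pderiv pderiv_pCons)
  ultimately show ?thesis using H by (simp add: abs_mult field_simps)
qed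

lemma poly_as_sum_atMost:
  fixes q :: "'a::{comm_semiring_0, semiring_1} poly"
  assumes "degree q \<le> n"
  shows "poly q t = (\<Sum>i\<le>n. coeff q i * t ^ i)"
  unfolding poly_altdef
  by (rule sum.mono_neutral_left) (use assms in \<open>auto simp: coeff_eq_0\<close>)

lemma even_part_poly:
  fixes q :: "real poly"
  assumes "degree q \<le> n"
  obtains E where "degree E \<le> n div 2" "coeff E 1 = coeff q 2"
    "\<And>t. poly E (t ^ 2) = (poly q t + poly q (- t)) / 2"
proof
  define E where "E = (\<Sum>k\<le>n div 2. monom (coeff q (2 * k)) k)"
  show "degree E \<le> n div 2" unfolding E_def
    by (intro degree_sum_le) (auto intro: order.trans[OF degree_monom_le])
  show "coeff E 1 = coeff q 2"
  proof (cases "n \<ge> 2")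
    case True
    then show ?thesis unfolding E_def coeff_sum by (simp add: coeff_monom)
  next
    case False
    with assms \<open>degree E \<le> n div 2\<close> show ?thesis by (simp add: coeff_eq_0)
  qed
  fix t
  have "(poly q t + poly q (- t)) / 2 = (\<Sum>i\<le>n. if even i then coeff q i * t ^ i else 0)"
    unfolding poly_as_sum_atMost[OF assms] sum.distrib[symmetric] sum_divide_distrib
    by (intro sum.cong refl) (auto simp: power_minus[of t])
  also have "\<dots> = (\<Sum>i\<in>(\<lambda>k. 2 * k) ` {..n div 2}. coeff q i * t ^ i)"
    by (subst sum.inter_filter[symmetric]) (auto intro!: sum.cong elim!: evenE)
  also have "\<dots> = poly E (t ^ 2)"
    unfolding E_def poly_sum by (subst sum.reindex) (auto simp: inj_on_def poly_monom power_mult)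
  finally show "poly E (t ^ 2) = (poly q t + poly q (- t)) / 2" by simp
qed

lemma abs_second_coeff_le:
  fixes q :: "real poly"
  assumes "degree q \<le> n" "h > 0" and bnd: "\<And>t. \<bar>t\<bar> \<le> h \<Longrightarrow> \<bar>poly q t\<bar> \<le> M"
  shows "\<bar>2 * coeff q 2\<bar> \<le> 4 * real (n div 2) ^ 2 * M / h ^ 2"
proof -
  obtain E where "degree E \<le> n div 2" and E1: "coeff E 1 = coeff q 2"
    and poly_E: "\<And>t. poly E (t ^ 2) = (poly q t + poly q (- t)) / 2"
    using even_part_poly[OF assms(1)] by blast
  have "\<bar>poly E u\<bar> \<le> M" if "0 \<le> u" "u \<le> h ^ 2" for u
  proof -
    have "\<bar>sqrt u\<bar> \<le> h" using that assms(2) by (simp add: real_sqrt_le_iff' abs_le_iff real_le_lsqrt)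
    then have "\<bar>poly q (sqrt u)\<bar> \<le> M" "\<bar>poly q (- sqrt u)\<bar> \<le> M" by (simp_all add: bnd)
    then show ?thesis using poly_E[of "sqrt u"] that by simp
  qed
  then have "\<bar>coeff E 1\<bar> \<le> 2 * real (n div 2) ^ 2 * M / h ^ 2"
    using assms(2) by (intro abs_coeff_one_le_markov[OF \<open>degree E \<le> n div 2\<close>]) auto
  then show ?thesis unfolding E1 by simp
qed

lemma poly_deg_le_on_line:
  fixes P :: "real^'d \<Rightarrow> real"
  assumes "poly_deg_le n P"
  obtains q where "degree q \<le> n" "\<And>t. P (a + t *\<^sub>R v) = poly q t"
proof -
  define S where "S = {\<alpha>::'d \<Rightarrow> nat. (\<Sum>i\<in>UNIV. \<alpha> i) \<le> n}"
  obtain c where P: "\<And>x. P x = (\<Sum>\<alpha>\<in>S. c \<alpha> * (\<Prod>i\<in>UNIV. (x $ i) ^ \<alpha> i))"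
    using assms unfolding poly_deg_le_def S_def by blast
  define q where "q = (\<Sum>\<alpha>\<in>S. smult (c \<alpha>) (\<Prod>i\<in>UNIV. [:a $ i, v $ i:] ^ \<alpha> i))"
  have "P (a + t *\<^sub>R v) = poly q t" for t
    unfolding P q_def poly_sum poly_smult poly_prod poly_power by (simp add: algebra_simps)
  moreover have "degree (\<Prod>i\<in>UNIV. [:a $ i, v $ i:] ^ \<alpha> i) \<le> n" if "\<alpha> \<in> S" for \<alpha>
  proof -
    have "degree (\<Prod>i\<in>UNIV. [:a $ i, v $ i:] ^ \<alpha> i) \<le> sum (degree \<circ> (\<lambda>i. [:a $ i, v $ i:] ^ \<alpha> i)) UNIV"
      by (rule degree_prod_sum_le) simp
    also have "\<dots> \<le> (\<Sum>i\<in>UNIV. \<alpha> i)"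
    proof (intro sum_mono)
      fix i
      have "degree ([:a $ i, v $ i:] ^ \<alpha> i) \<le> degree [:a $ i, v $ i:] * \<alpha> i"
        by (rule degree_power_le)
      also have "\<dots> \<le> 1 * \<alpha> i" by (intro mult_le_mono) auto
      finally show "(degree \<circ> (\<lambda>i. [:a $ i, v $ i:] ^ \<alpha> i)) i \<le> \<alpha> i" by simp
    qed
    finally show ?thesis using that unfolding S_def by simp
  qed
  then have "degree q \<le> n"
    unfolding q_def by (cases "finite S") (auto intro!: degree_sum_le order.trans[OF degree_smult_le])
  ultimately show ?thesis using that by blast
qed

lemma abs_le_sup_norm_ball:
  fixes P :: "real^'d \<Rightarrow> real"
  assumes "poly_deg_le n P" "norm y \<le> r"
  shows "\<bar>P y\<bar> \<le> sup_norm_ball P r"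
proof -
  obtain c where P: "P = (\<lambda>x. \<Sum>\<alpha>\<in>{\<alpha>. (\<Sum>i\<in>UNIV. \<alpha> i) \<le> n}. c \<alpha> * (\<Prod>i\<in>UNIV. (x $ i) ^ \<alpha> i))"
    using assms(1) unfolding poly_deg_le_def by blast
  have "continuous_on (cball 0 r) (\<lambda>x. \<bar>P x\<bar>)"
    unfolding P by (intro continuous_intros)
  then have "bdd_above ((\<lambda>x. \<bar>P x\<bar>) ` cball 0 r)"
    by (intro bounded_imp_bdd_above compact_imp_bounded compact_continuous_image) auto
  then show ?thesis
    unfolding sup_norm_ball_def using assms(2) by (intro cSUP_upper) auto
qed

lemma abs_poly_deg_le_growth:
  fixes P :: "real^'d \<Rightarrow> real"
  assumes P: "poly_deg_le n P" and r: "0 < r" "r \<le> R" and y: "norm y \<le> R"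
  shows "\<bar>P y\<bar> \<le> (2 * R / r) ^ n * sup_norm_ball P r"
proof -
  let ?M = "sup_norm_ball P r"
  have "0 \<le> ?M" using abs_le_sup_norm_ball[OF P, of 0 r] r by (simp add: order.trans[OF abs_ge_zero])
  have "\<bar>P y\<bar> \<le> ?M * (2 * (max 1 (norm y / r))) ^ n"
  proof (cases "norm y \<le> r")
    case True
    have "1 \<le> (2 * max 1 (norm y / r)) ^ n" by (intro one_le_power) simp
    from mult_left_mono[OF this \<open>0 \<le> ?M\<close>] show ?thesis
      using abs_le_sup_norm_ball[OF P True] by simp
  next
    case False
    let ?u = "(r / norm y) *\<^sub>R y"
    obtain g where "degree g \<le> n" and g: "\<And>s. P (0 + s *\<^sub>R ?u) = poly g s"
      using poly_deg_le_on_line[OF P, where a = 0 and v = ?u] by blast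
    have "\<bar>poly g s\<bar> \<le> ?M" if "\<bar>s\<bar> \<le> 1" for s
      unfolding g[symmetric] using that False r
      by (intro abs_le_sup_norm_ball[OF P]) (simp add: abs_mult mult_left_le_one_le)
    then have "\<bar>poly g (norm y / r)\<bar> \<le> ?M * (2 * (norm y / r)) ^ n"
      using False r by (intro abs_poly_le_growth[OF \<open>degree g \<le> n\<close>]) auto
    moreover have "poly g (norm y / r) = P y" using g[of "norm y / r"] False r by (cases "y = 0") auto
    ultimately show ?thesis using False r by simp
  qed
  also have "\<dots> \<le> ?M * (2 * R / r) ^ n"
  proof -
    have "max 1 (norm y / r) \<le> R / r"
      using r y by (simp add: divide_right_mono le_divide_eq_1_pos)
    then show ?thesis using \<open>0 \<le> ?M\<close> by (intro mult_left_mono power_mono) auto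
  qed
  finally show ?thesis by (simp add: mult.commute)
qed

lemma dir_deriv2_eq_second_coeff:
  assumes "\<And>t. P (x + t *\<^sub>R \<mu>) = poly q t"
  shows "dir_deriv2 P \<mu> x = 2 * coeff q 2"
proof -
  have "(\<lambda>t. P (x + t *\<^sub>R \<mu>)) = poly q" using assms by auto
  moreover have "deriv (poly p) = poly (pderiv p)" for p :: "real poly"
    by (intro ext DERIV_imp_deriv poly_DERIV)
  ultimately show ?thesis
    unfolding dir_deriv2_def by (simp add: poly_0_coeff_0 coeff_pderiv numeral_2_eq_2)
qed

lemma markov_constant_le:
  fixes r \<rho> :: real
  assumes "0 < r" "r \<le> 4 * \<rho>"
  shows "4 * real (n div 2) ^ 2 / (3 * \<rho>) ^ 2 \<le> 8 * real n * (real n - 1) / r ^ 2"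
proof (cases "n \<ge> 2")
  case True
  have "\<rho> > 0" using assms by simp
  have "real (2 * (n div 2)) ^ 2 \<le> real n ^ 2" by (intro power_mono) simp_all
  then have "4 * real (n div 2) ^ 2 / (3 * \<rho>) ^ 2 \<le> real n ^ 2 / (3 * \<rho>) ^ 2"
    by (intro divide_right_mono) (simp_all add: power_mult_distrib)
  also have "\<dots> = 16 * real n ^ 2 / (9 * (4 * \<rho>) ^ 2)"
    using \<open>\<rho> > 0\<close> by (simp add: power_mult_distrib)
  also have "\<dots> \<le> 16 * real n ^ 2 / (9 * r ^ 2)"
    using assms by (intro divide_left_mono mult_left_mono power_mono mult_pos_pos) simp_all
  also have "\<dots> \<le> 72 * real n * (real n - 1) / (9 * r ^ 2)"
  proof (intro divide_right_mono)
    have "0 \<le> real n * (7 * real n - 9)" using True by simp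
    then show "16 * real n ^ 2 \<le> 72 * real n * (real n - 1)"
      by (simp add: power2_eq_square algebra_simps)
  qed simp
  also have "\<dots> = 8 * real n * (real n - 1) / r ^ 2" by simp
  finally show ?thesis .
next
  case False
  then have "n = 0 \<or> n = 1" by auto
  then show ?thesis by auto
qed

theorem lemma5:
  fixes P :: "real^'d \<Rightarrow> real" and n :: nat and r :: real
    and \<mu> x :: "real^'d"
  assumes "poly_deg_le n P" and "r > 0" and "norm \<mu> = 1" and "norm x \<ge> r / 4"
  shows "\<bar>dir_deriv2 P \<mu> x\<bar>
           \<le> (8 * norm x / r) ^ n * (8 * real n * (real n - 1) / r^2) * sup_norm_ball P r"
proof -
  define B where "B = (8 * norm x / r) ^ n * sup_norm_ball P r"
  obtain q where "degree q \<le> n" and q: "\<And>t. P (x + t *\<^sub>R \<mu>) = poly q t"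
    using poly_deg_le_on_line[OF assms(1), where a = x and v = \<mu>] by blast
  have bound: "\<bar>poly q t\<bar> \<le> B" if "\<bar>t\<bar> \<le> 3 * norm x" for t
  proof -
    have "norm (x + t *\<^sub>R \<mu>) \<le> 4 * norm x"
      using norm_triangle_ineq[of x "t *\<^sub>R \<mu>"] that assms(3) by simp
    then show ?thesis
      unfolding q[symmetric] B_def using abs_poly_deg_le_growth[OF assms(1,2), of "4 * norm x"] assms(4)
      by simp
  qed
  have "0 \<le> B" using bound[of 0] assms(2,4) by simp
  have "\<bar>dir_deriv2 P \<mu> x\<bar> \<le> 4 * real (n div 2) ^ 2 * B / (3 * norm x) ^ 2"
    unfolding dir_deriv2_eq_second_coeff[OF q] using assms(2,4)
    by (intro abs_second_coeff_le[OF \<open>degree q \<le> n\<close> _ bound]) auto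
  also have "\<dots> = 4 * real (n div 2) ^ 2 / (3 * norm x) ^ 2 * B" by simp
  also have "\<dots> \<le> 8 * real n * (real n - 1) / r ^ 2 * B"
    using markov_constant_le[OF assms(2), of "norm x" n] assms(4) \<open>0 \<le> B\<close>
    by (intro mult_right_mono) simp_all
  finally show ?thesis unfolding B_def by (simp add: ac_simps)
qed

end
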